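(* In the setting below: (1) there are no non-trivial holomorphic $1$-forms on $T_M$; (2) if $K$ denotes the canonical bundle of $T_M$, then for every integer $k>0$ the bundle $K^{\otimes k}$ has no non-trivial global holomorphic sections; consequently the Kodaira dimension of $T_M$ equals $-\infty$.
   Context: Let $n\ge 1$ and let $M=(m_{ij})\in SL(2n+1,\mathbb Z)$. Assume that $M$ has exactly one real eigenvalue $\alpha$, that $\alpha>0$, $\alpha\neq 1$, that $\alpha$ is a simple eigenvalue, and that the remaining eigenvalues are $\beta_1,\dots,\beta_k,\bar\beta_1,\dots,\bar\beta_k$ with $\mathrm{Im}\,\beta_j>0$. Let $W\subset\mathbb C^{2n+1}$ be the direct sum of the generalized eigenspaces of $M$ for $\beta_1,\dots,\beta_k$ (so $\dim_{\mathbb C}W=n$). Fix a real eigenvector $a=(a^{(1)},\dots,a^{(2n+1)})^\top\in\mathbb R^{2n+1}$ of $M$ for $\alpha$ and a basis $b_1,\dots,b_n$ of $W$, $b_j=(b_j^{(1)},\dots,b_j^{(2n+1)})^\top$, and let $R=(r_{\ell j})\in M_n(\mathbb C)$ be given by $Mb_j=\sum_{\ell=1}^n r_{\ell j}b_\ell$. For $i=1,\dots,2n+1$ put $u_i=(a^{(i)},b_1^{(i)},\dots,b_n^{(i)})^\top\in\mathbb R\times\mathbb C^n$. Let $\mathbb H=\{w\in\mathbb C:\mathrm{Im}\,w>0\}$, and define holomorphic automorphisms of $\mathbb H\times\mathbb C^n$ by $g_0(w,z)=(\alpha w,R^\top z)$ and $g_i(w,z)=(w,z)+u_i$ for $1\le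 i\le 2n+1$. Let $G_M$ be the group generated by $g_0,\dots,g_{2n+1}$. The action of $G_M$ is free and properly discontinuous, and $T_M:=(\mathbb H\times\mathbb C^n)/G_M$ is a compact complex manifold of complex dimension $n+1$. *)

theory Defs
  imports "HOL-Analysis.Analysis"
begin

definition ceigenvalue :: "complex^'m^'m \<Rightarrow> complex \<Rightarrow> bool" where
  "ceigenvalue A \<mu> \<longleftrightarrow> (\<exists>v. v \<noteq> 0 \<and> A *v v = \<mu> *s v)"

definition gen_eigenspace :: "complex^'m^'m \<Rightarrow> complex \<Rightarrow> (complex^'m) set" where
  "gen_eigenspace A \<mu> = {v. \<exists>k. ((\<lambda>x. A *v x - \<mu> *s x) ^^ k) v = 0}"

text \<open>Points of C^(n+1) = C x C^n: coordinate None is w, coordinate Some j is z_j.\<close>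
definition upper_domain :: "(complex^('n::finite option)) set" where
  "upper_domain = {p. Im (p $ None) > 0}"

definition holo :: "(complex^'k \<Rightarrow> complex) \<Rightarrow> (complex^'k) set \<Rightarrow> bool" where
  "holo f S \<longleftrightarrow> (\<forall>p\<in>S. \<exists>L. (f has_derivative L) (at p) \<and> (\<forall>c v. L (c *s v) = c * L v))"

definition g0 :: "real \<Rightarrow> complex^'n^'n \<Rightarrow> complex^('n::finite option) \<Rightarrow> complex^('n option)" where
  "g0 \<alpha> R p = (\<chi> i. case i of None \<Rightarrow> complex_of_real \<alpha> * p $ None
                            | Some l \<Rightarrow> (\<Sum>j\<in>UNIV. R $ j $ l * p $ Some j))"

definition uvec :: "real^'m \<Rightarrow> ('n \<Rightarrow> complex^'m) \<Rightarrow> 'm \<Rightarrow> complex^('n::finite option)" where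
  "uvec a b i = (\<chi> c. case c of None \<Rightarrow> complex_of_real (a $ i) | Some j \<Rightarrow> b j $ i)"

definition generators :: "real \<Rightarrow> complex^'n^'n \<Rightarrow> real^'m \<Rightarrow> ('n \<Rightarrow> complex^'m)
    \<Rightarrow> (complex^('n::finite option) \<Rightarrow> complex^('n option)) set" where
  "generators \<alpha> R a b = insert (g0 \<alpha> R) ((\<lambda>i p. p + uvec a b i) ` UNIV)"

inductive_set gen_group :: "('a \<Rightarrow> 'a) set \<Rightarrow> ('a \<Rightarrow> 'a) set" for S where
  gg_id: "id \<in> gen_group S"
| gg_gen: "g \<in> gen_group S \<Longrightarrow> s \<in> S \<Longrightarrow> s \<circ> g \<in> gen_group S"
| gg_inv: "g \<in> gen_group S \<Longrightarrow> s \<in> S \<Longrightarrow> inv s \<circ> g \<in> gen_group S"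

definition form_at :: "('k \<Rightarrow> complex^'k \<Rightarrow> complex) \<Rightarrow> complex^'k \<Rightarrow> complex^'k \<Rightarrow> complex" where
  "form_at c p v = (\<Sum>i\<in>UNIV. c i p * v $ i)"

definition cjac :: "(complex^'k \<Rightarrow> complex^'k) \<Rightarrow> complex" where
  "cjac L = det (\<chi> i j. L (axis j 1) $ i)"

text \<open>G-invariant holomorphic 1-form on D (= holomorphic 1-form on D/G).\<close>
definition invariant_holo_1form where
  "invariant_holo_1form G D c \<longleftrightarrow> (\<forall>i. holo (c i) D) \<and>
     (\<forall>g\<in>G. \<forall>p\<in>D. \<forall>g'. (g has_derivative g') (at p) \<longrightarrow>
        (\<forall>v. form_at c (g p) (g' v) = form_at c p v))"

text \<open>G-invariant holomorphic section h (dw \<and> dz_1 \<and> ... \<and> dz_n)^{\<otimes>k} of K^k on D.\<close>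
definition invariant_pluricanonical where
  "invariant_pluricanonical G D (k::nat) h \<longleftrightarrow> holo h D \<and>
     (\<forall>g\<in>G. \<forall>p\<in>D. \<forall>g'. (g has_derivative g') (at p) \<longrightarrow>
        h (g p) * (cjac g') ^ k = h p)"

end

theory Submission
  imports Defs "HOL-Complex_Analysis.Complex_Analysis"
begin

(* Every b_j is killed by a product of factors M - \<beta> with Im \<beta> > 0, its conjugate by factors
   with Im \<beta> < 0, and a by M - \<alpha>. These sets of eigenvalues are disjoint, so a, b_j, conj b_j form
   a basis of C^(2n+1). Hence the translation vectors u_i span the real hyperplane Im w = 0 of
   H x C^n over the reals, and in this basis M becomes \<alpha> \<oplus> R \<oplus> conj R, so that
   |det B|^2 = \<alpha> det M = \<alpha> for the matrix B = \<alpha> \<oplus> R\<^sup>T of g0.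

   A holomorphic function on H x C^n invariant under the translations u_i is bounded on each slice
   Im w = t, since a fundamental domain is compact, so by Liouville it depends on w only. If a
   family of such functions transforms under g0 by an injective map T, its real periods are
   stable under multiplication by \<alpha> and 1/\<alpha>, hence accumulate at 0; so the family is constant,
   and the constant is a fixed point of T. For the coefficients of a 1-form T is B\<^sup>T, which has
   no eigenvalue 1 (R has no real eigenvalues and \<alpha> \<noteq> 1); for a section of K^k, T is
   multiplication by (det B)^k, whose modulus \<alpha>^(k/2) is not 1. *)

section \<open>Block matrices and determinants\<close>

lemma sum_UNIV_sum:
  "(\<Sum>k\<in>UNIV. f k) = (\<Sum>x\<in>UNIV. f (Inl x)) + (\<Sum>y\<in>UNIV. f (Inr y))"
  for f :: "'a::finite + 'b::finite \<Rightarrow> 'c::comm_monoid_add"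
  using sum.Plus[of UNIV UNIV f] by (simp add: UNIV_Plus_UNIV comp_def)

lemma prod_UNIV_sum:
  "(\<Prod>k\<in>UNIV. f k) = (\<Prod>x\<in>UNIV. f (Inl x)) * (\<Prod>y\<in>UNIV. f (Inr y))"
  for f :: "'a::finite + 'b::finite \<Rightarrow> 'c::comm_monoid_mult"
  using prod.Plus[of UNIV UNIV f] by (simp add: UNIV_Plus_UNIV comp_def)

lemma sum_UNIV_option: "(\<Sum>k\<in>UNIV. f k) = f None + (\<Sum>j\<in>UNIV. f (Some j))"
  for f :: "'a::finite option \<Rightarrow> 'c::comm_monoid_add"
  by (simp add: UNIV_option_conv sum.reindex)

lemma det_reindex_bij:
  fixes A :: "'r::comm_ring_1^'b::finite^'b" and e :: "'a::finite \<Rightarrow> 'b"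
  assumes e: "bij e"
  shows "det (\<chi> i j. A $ e i $ e j) = det A"
proof -
  let ?\<Psi> = "map_permutation UNIV e"
  have \<Psi>: "?\<Psi> p = e \<circ> p \<circ> inv e" for p
    using e by (auto simp: map_permutation_def restrict_id_def fun_eq_iff bij_is_surj bij_is_inj inv_into_def)
  have bij\<Psi>: "bij_betw ?\<Psi> {p. p permutes (UNIV::'a set)} {p. p permutes (UNIV::'b set)}"
  proof (rule bij_betw_byWitness[where f' = "\<lambda>p. inv e \<circ> p \<circ> e"])
    show "\<forall>p\<in>{p. p permutes UNIV}. inv e \<circ> ?\<Psi> p \<circ> e = p"
      using e by (auto simp: \<Psi> fun_eq_iff bij_is_inj)
    show "\<forall>p\<in>{p. p permutes UNIV}. ?\<Psi> (inv e \<circ> p \<circ> e) = p"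
      using e by (auto simp: \<Psi> fun_eq_iff bij_is_surj surj_f_inv_f)
    show "?\<Psi> ` {p. p permutes UNIV} \<subseteq> {p. p permutes UNIV}"
      using e by (auto intro!: map_permutation_permutes simp: bij_is_inj bij_is_surj)
    show "(\<lambda>p. inv e \<circ> p \<circ> e) ` {p. p permutes UNIV} \<subseteq> {p. p permutes UNIV}"
      using e by (auto intro!: bij_imp_permutes bij_comp bij_imp_bij_inv dest: permutes_bij)
  qed
  have "det A = (\<Sum>p\<in>{p. p permutes (UNIV::'a set)}. of_int (sign (?\<Psi> p)) * (\<Prod>i\<in>UNIV. A $ i $ ?\<Psi> p i))"
    unfolding det_def by (rule sum.reindex_bij_betw[OF bij\<Psi>, symmetric])
  also have "\<dots> = (\<Sum>p\<in>{p. p permutes (UNIV::'a set)}. of_int (sign p) * (\<Prod>i\<in>UNIV. A $ e i $ e (p i)))"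
  proof (rule sum.cong[OF refl])
    fix p assume p: "p \<in> {p. p permutes (UNIV::'a set)}"
    have "sign (?\<Psi> p) = sign p"
      using p e by (simp add: sign_map_permutation bij_is_inj)
    moreover have "(\<Prod>i\<in>UNIV. A $ i $ ?\<Psi> p i) = (\<Prod>i\<in>UNIV. A $ e i $ e (p i))"
      using prod.reindex_bij_betw[OF e, symmetric, of "\<lambda>i. A $ i $ ?\<Psi> p i"] e
      by (simp add: \<Psi> bij_is_inj)
    ultimately show "of_int (sign (?\<Psi> p)) * (\<Prod>i\<in>UNIV. A $ i $ ?\<Psi> p i) = of_int (sign p) * (\<Prod>i\<in>UNIV. A $ e i $ e (p i))"
      by simp
  qed
  finally show ?thesis unfolding det_def by simp
qed

lemma map_sum_eq_map_permutation_comp: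
  "map_sum p q = map_permutation UNIV Inl p \<circ> map_permutation UNIV Inr q"
proof
  fix x show "map_sum p q x = (map_permutation UNIV Inl p \<circ> map_permutation UNIV Inr q) x"
    by (cases x) (auto simp: map_permutation_def restrict_id_def)
qed

lemma
  assumes "p permutes (UNIV::'a::finite set)" and "q permutes (UNIV::'b::finite set)"
  shows map_sum_permutes: "map_sum p q permutes UNIV"
    and sign_map_sum: "sign (map_sum p q) = sign p * sign q"
proof -
  let ?p = "map_permutation UNIV (Inl :: 'a \<Rightarrow> 'a + 'b) p"
  let ?q = "map_permutation UNIV (Inr :: 'b \<Rightarrow> 'a + 'b) q"
  have "?p permutes range Inl" "?q permutes range Inr"
    using assms by (simp_all add: map_permutation_permutes bij_betw_def)
  then have perm: "?p permutes UNIV" "?q permutes UNIV"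
    by (auto intro: permutes_subset[of _ "range _"])
  then show "map_sum p q permutes UNIV"
    unfolding map_sum_eq_map_permutation_comp by (rule permutes_compose[rotated])
  have "sign (map_sum p q) = sign ?p * sign ?q"
    unfolding map_sum_eq_map_permutation_comp
    by (intro sign_compose permutes_imp_permutation[OF finite_class.finite_UNIV] perm)
  also have "\<dots> = sign p * sign q"
    using assms by (simp add: sign_map_permutation)
  finally show "sign (map_sum p q) = sign p * sign q" .
qed

definition block_diag :: "'r::zero^'a^'a \<Rightarrow> 'r^'b^'b \<Rightarrow> 'r^('a + 'b)^('a + 'b)" where
  "block_diag A C = (\<chi> i j. case (i, j) of (Inl x, Inl y) \<Rightarrow> A $ x $ y | (Inr x, Inr y) \<Rightarrow> C $ x $ y | _ \<Rightarrow> 0)"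

lemma block_diag_component [simp]:
  "block_diag A C $ Inl x $ Inl y = A $ x $ y" "block_diag A C $ Inr x $ Inr y' = C $ x $ y'"
  "block_diag A C $ Inl x $ Inr y' = 0" "block_diag A C $ Inr x' $ Inl y = 0"
  by (simp_all add: block_diag_def)

lemma block_diag_nonzero_term_map_sum:
  fixes A :: "'r::comm_ring_1^'a::finite^'a" and C :: "'r^'b::finite^'b"
  assumes p: "p permutes UNIV" and nz: "(\<Prod>i\<in>UNIV. block_diag A C $ i $ p i) \<noteq> 0"
  shows "\<exists>p1 p2. p1 permutes UNIV \<and> p2 permutes UNIV \<and> p = map_sum p1 p2"
proof -
  have nz_entry: "block_diag A C $ i $ p i \<noteq> 0" for i
    using nz by (metis UNIV_I finite_class.finite_UNIV prod_zero)
  have l: "p (Inl x) = Inl (projl (p (Inl x)))" for x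
    using nz_entry[of "Inl x"] by (cases "p (Inl x)") (simp_all add: block_diag_def)
  have r: "p (Inr y) = Inr (projr (p (Inr y)))" for y
    using nz_entry[of "Inr y"] by (cases "p (Inr y)") (simp_all add: block_diag_def)
  define p1 where "p1 x = projl (p (Inl x))" for x
  define p2 where "p2 y = projr (p (Inr y))" for y
  have "p = map_sum p1 p2"
  proof
    fix x show "p x = map_sum p1 p2 x"
      by (cases x) (use l r in \<open>simp_all add: p1_def p2_def\<close>)
  qed
  moreover have "inj p1"
  proof (rule injI)
    fix x y assume "p1 x = p1 y"
    then have "p (Inl x) = p (Inl y)" using l[of x] l[of y] by (simp add: p1_def)
    then show "x = y" using permutes_inj[OF p] by (simp add: inj_eq)
  qed
  moreover have "inj p2"
  proof (rule injI)
    fix x y assume "p2 x = p2 y"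
    then have "p (Inr x) = p (Inr y)" using r[of x] r[of y] by (simp add: p2_def)
    then show "x = y" using permutes_inj[OF p] by (simp add: inj_eq)
  qed
  ultimately have "p1 permutes UNIV" "p2 permutes UNIV"
    by (auto intro: inj_imp_permutes)
  with \<open>p = map_sum p1 p2\<close> show ?thesis
    by blast
qed

lemma det_block_diag:
  fixes A :: "'r::comm_ring_1^'a::finite^'a" and C :: "'r^'b::finite^'b"
  shows "det (block_diag A C) = det A * det C"
proof -
  let ?t = "\<lambda>p. of_int (sign p) * (\<Prod>i\<in>UNIV. block_diag A C $ i $ p i)"
  let ?S = "{p. p permutes (UNIV::'a set)} \<times> {p. p permutes (UNIV::'b set)}"
  let ?\<Phi> = "\<lambda>(p1, p2). map_sum p1 p2"
  have inj: "inj_on ?\<Phi> ?S"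
  proof (rule inj_onI, clarify)
    fix p1 p2 q1 q2 assume eq: "map_sum p1 p2 = map_sum q1 q2"
    have "p1 x = q1 x" "p2 y = q2 y" for x y
      using fun_cong[OF eq, of "Inl x"] fun_cong[OF eq, of "Inr y"] by simp_all
    then show "p1 = q1 \<and> p2 = q2" by auto
  qed
  have zero: "?t p = 0" if "p permutes UNIV" "p \<notin> ?\<Phi> ` ?S" for p
    using block_diag_nonzero_term_map_sum[OF that(1), of A C] that(2) by force
  have "det (block_diag A C) = sum ?t (?\<Phi> ` ?S)"
    unfolding det_def by (rule sum.mono_neutral_right) (auto simp: map_sum_permutes zero)
  also have "\<dots> = (\<Sum>(p1, p2)\<in>?S. ?t (map_sum p1 p2))"
    unfolding sum.reindex[OF inj] by (simp add: comp_def case_prod_unfold)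
  also have "\<dots> = (\<Sum>(p1, p2)\<in>?S. (of_int (sign p1) * (\<Prod>i\<in>UNIV. A $ i $ p1 i))
                                    * (of_int (sign p2) * (\<Prod>i\<in>UNIV. C $ i $ p2 i)))"
    by (rule sum.cong[OF refl])
       (auto simp: sign_map_sum prod_UNIV_sum block_diag_def mult_ac)
  also have "\<dots> = det A * det C"
    unfolding det_def sum_product sum.cartesian_product by (simp add: case_prod_unfold)
  finally show ?thesis .
qed

lemma det_of_int: "det (\<chi> i j. of_int (M $ i $ j)) = (of_int (det M) :: 'a::comm_ring_1)"
  unfolding det_def by (simp add: of_int_sum of_int_prod)

definition block_vec :: "'r^'a \<Rightarrow> 'r^'b \<Rightarrow> 'r^('a + 'b)" where
  "block_vec v w = (\<chi> r. case r of Inl i \<Rightarrow> v $ i | Inr j \<Rightarrow> w $ j)"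

lemma block_vec_component [simp]: "block_vec v w $ Inl i = v $ i" "block_vec v w $ Inr j = w $ j"
  by (simp_all add: block_vec_def)

lemma mat_matrix_vector_mult: "mat c *v v = c *s v"
  by (simp add: vec_eq_iff matrix_vector_mult_def mat_def if_distrib[of "\<lambda>x. x * _"] cong: if_cong)

lemma block_diag_mult_block_vec:
  fixes A :: "'r::comm_semiring_1^'a::finite^'a" and C :: "'r^'b::finite^'b"
  shows "block_diag A C *v block_vec v w = block_vec (A *v v) (C *v w)"
  unfolding vec_eq_iff
proof
  fix r show "(block_diag A C *v block_vec v w) $ r = block_vec (A *v v) (C *v w) $ r"
    by (cases r) (simp_all add: block_diag_def matrix_vector_mult_def sum_UNIV_sum)
qed

definition vconj :: "complex^'m \<Rightarrow> complex^'m" where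
  "vconj v = (\<chi> i. cnj (v $ i))"

lemma vconj_eq_0_iff [simp]: "vconj v = 0 \<longleftrightarrow> v = 0"
  and vconj_diff: "vconj (v - w) = vconj v - vconj w"
  and vconj_scale: "vconj (c *s v) = cnj c *s vconj v"
  and vconj_sum: "vconj (\<Sum>j\<in>J. f j) = (\<Sum>j\<in>J. vconj (f j))"
  by (auto simp: vconj_def vec_eq_iff sum_component cnj_sum)

definition mconj :: "complex^'n^'m \<Rightarrow> complex^'n^'m" where
  "mconj X = (\<chi> i j. cnj (X $ i $ j))"

lemma vconj_matrix_vector_mult: "vconj (X *v v) = mconj X *v vconj v"
  by (simp add: vconj_def mconj_def vec_eq_iff matrix_vector_mult_def)

lemma det_mconj: "det (mconj X) = cnj (det X)"
  unfolding det_def mconj_def by (simp add: cnj_sum cnj_prod)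

definition of_real_vec :: "real^'m \<Rightarrow> complex^'m" where
  "of_real_vec v = (\<chi> i. complex_of_real (v $ i))"

lemma of_real_vec_eq_0_iff [simp]: "of_real_vec v = 0 \<longleftrightarrow> v = 0"
  by (auto simp: of_real_vec_def vec_eq_iff)

lemma of_real_vec_matrix_vector_mult:
  "of_real_vec (X *v v) = (\<chi> i j. complex_of_real (X $ i $ j)) *v of_real_vec v"
  by (simp add: vec_eq_iff of_real_vec_def matrix_vector_mult_def)

lemma of_real_vec_scale: "of_real_vec (c *s v) = complex_of_real c *s of_real_vec v"
  by (simp add: vec_eq_iff of_real_vec_def)

section \<open>Vectors annihilated by products of shifts\<close>

primrec shift_prod :: "'a::field^'m^'m \<Rightarrow> 'a list \<Rightarrow> 'a^'m \<Rightarrow> 'a^'m" where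
  "shift_prod A [] v = v"
| "shift_prod A (\<beta> # L) v = A *v shift_prod A L v - \<beta> *s shift_prod A L v"

lemma shift_prod_add: "shift_prod A L (v + w) = shift_prod A L v + shift_prod A L w"
  by (induction L) (simp_all add: matrix_vector_right_distrib vector_add_ldistrib)

lemma shift_prod_diff: "shift_prod A L (v - w) = shift_prod A L v - shift_prod A L w"
  by (induction L) (simp_all add: matrix_vector_mult_diff_distrib vector_ssub_ldistrib)

lemma shift_prod_scale: "shift_prod A L (c *s v) = c *s shift_prod A L v"
  by (induction L) (simp_all add: vector_scalar_commute vector_ssub_ldistrib)

lemma shift_prod_zero [simp]: "shift_prod A L 0 = 0"
  by (induction L) simp_all

lemma shift_prod_append: "shift_prod A (L @ K) v = shift_prod A L (shift_prod A K v)"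
  by (induction L) simp_all

lemma shift_prod_matrix_vector_mult: "shift_prod A L (A *v v) = A *v shift_prod A L v"
  by (induction L) (simp_all add: matrix_vector_mult_diff_distrib vector_scalar_commute)

lemma shift_prod_commute: "shift_prod A L (shift_prod A K v) = shift_prod A K (shift_prod A L v)"
  by (induction K) (simp_all add: shift_prod_diff shift_prod_scale shift_prod_matrix_vector_mult)

lemma shift_prod_eigenvector:
  assumes "A *v v = \<mu> *s v"
  shows "shift_prod A L v = (\<Prod>\<beta>\<leftarrow>L. \<mu> - \<beta>) *s v"
proof (induction L)
  case (Cons \<beta> L)
  then show ?case
    by (simp add: vector_scalar_commute assms) (simp add: vec_eq_iff algebra_simps)
qed simp

lemma funpow_shift_eq_shift_prod:
  "((\<lambda>x. A *v x - \<beta> *s x) ^^ k) v = shift_prod A (replicate k \<beta>) v"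
  by (induction k) simp_all

definition annihilated :: "'a::field set \<Rightarrow> 'a^'m^'m \<Rightarrow> 'a^'m \<Rightarrow> bool" where
  "annihilated S A v \<longleftrightarrow> (\<exists>L. set L \<subseteq> S \<and> shift_prod A L v = 0)"

lemma annihilated_zero: "annihilated S A 0"
  unfolding annihilated_def by (rule exI[of _ "[]"]) simp

lemma annihilated_add:
  assumes "annihilated S A v" and "annihilated T A w"
  shows "annihilated (S \<union> T) A (v + w)"
proof -
  obtain L K where L: "set L \<subseteq> S" "shift_prod A L v = 0" and K: "set K \<subseteq> T" "shift_prod A K w = 0"
    using assms unfolding annihilated_def by blast
  have "shift_prod A (L @ K) (v + w) = 0"
    by (simp add: shift_prod_append shift_prod_add K(2)) (metis L(2) shift_prod_commute shift_prod_zero)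
  then show ?thesis
    unfolding annihilated_def using L(1) K(1) by (intro exI[of _ "L @ K"]) auto
qed

lemma annihilated_scale: "annihilated S A v \<Longrightarrow> annihilated S A (c *s v)"
  unfolding annihilated_def by (auto simp: shift_prod_scale)

lemma annihilated_uminus: "annihilated S A v \<Longrightarrow> annihilated S A (- v)"
  using annihilated_scale[of S A v "- 1"] by simp

lemma annihilated_sum:
  "(\<And>j. j \<in> J \<Longrightarrow> annihilated S A (f j)) \<Longrightarrow> annihilated S A (\<Sum>j\<in>J. f j)"
proof (induction J rule: infinite_finite_induct)
  case (insert j J)
  then show ?case
    using annihilated_add[of S A "f j" S "sum f J"] by simp
qed (simp_all add: annihilated_zero)

lemma annihilated_eigenvector: "A *v v = \<mu> *s v \<Longrightarrow> annihilated {\<mu>} A v"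
  unfolding annihilated_def by (intro exI[of _ "[\<mu>]"]) simp

lemma shift_prod_disjoint_eq_0:
  assumes "shift_prod A L v = 0" and "shift_prod A K v = 0" and "set L \<inter> set K = {}"
  shows "v = 0"
  using assms
proof (induction L arbitrary: v)
  case (Cons \<beta> L)
  let ?u = "A *v v - \<beta> *s v"
  have uL: "shift_prod A L ?u = 0"
    using shift_prod_commute[of A L "[\<beta>]" v] Cons.prems(1) by (simp only: shift_prod.simps)
  have uK: "shift_prod A K ?u = 0"
    using Cons.prems(2) by (simp add: shift_prod_diff shift_prod_scale shift_prod_matrix_vector_mult)
  have "A *v v = \<beta> *s v"
    using Cons.IH[OF uL uK] Cons.prems(3) by auto
  then have "(\<Prod>\<kappa>\<leftarrow>K. \<beta> - \<kappa>) *s v = 0"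
    using Cons.prems(2) by (metis shift_prod_eigenvector)
  moreover have "(\<Prod>\<kappa>\<leftarrow>K. \<beta> - \<kappa>) \<noteq> 0"
    using Cons.prems(3) by (auto simp: prod_list_zero_iff)
  ultimately show ?case
    by (simp add: vec_eq_iff)
qed simp

lemma annihilated_disjoint_eq_0:
  assumes "annihilated S A v" and "annihilated T A v" and "S \<inter> T = {}"
  shows "v = 0"
  using assms shift_prod_disjoint_eq_0 unfolding annihilated_def by blast

lemma annihilated_sum3_eq_0:
  assumes "x + y + z = 0"
    and "annihilated S1 A x" "annihilated S2 A y" "annihilated S3 A z"
    and "S1 \<inter> S2 = {}" "S1 \<inter> S3 = {}" "S2 \<inter> S3 = {}"
  shows "x = 0" and "y = 0" and "z = 0"
proof -
  have "x = - (y + z)"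
    using assms(1) by (metis add.assoc eq_neg_iff_add_eq_0)
  then have "annihilated (S2 \<union> S3) A x"
    using annihilated_uminus[OF annihilated_add[OF assms(3,4)]] by simp
  then show x0: "x = 0"
    using annihilated_disjoint_eq_0 assms(2,5,6) by blast
  have "y = - z"
    using assms(1) x0 by (simp add: eq_neg_iff_add_eq_0)
  then have "annihilated S3 A y"
    using annihilated_uminus[OF assms(4)] by simp
  then show y0: "y = 0"
    using annihilated_disjoint_eq_0 assms(3,7) by blast
  show "z = 0"
    using assms(1) x0 y0 by simp
qed

lemma span_gen_eigenspaces_annihilated:
  "vec.span (\<Union>{gen_eigenspace A \<beta> | \<beta>. ceigenvalue A \<beta> \<and> \<beta> \<in> S}) \<subseteq> {v. annihilated S A v}"
proof (rule vec.span_minimal)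
  show "\<Union>{gen_eigenspace A \<beta> | \<beta>. ceigenvalue A \<beta> \<and> \<beta> \<in> S} \<subseteq> {v. annihilated S A v}"
    unfolding gen_eigenspace_def annihilated_def funpow_shift_eq_shift_prod
    by (force intro: exI[of _ "replicate k \<beta>" for k \<beta>])
  show "vec.subspace {v. annihilated S A v}"
    unfolding vec.subspace_def
    using annihilated_zero annihilated_add[of S A _ S] annihilated_scale by auto
qed

lemma annihilated_vconj:
  assumes real: "mconj A = A" and "annihilated S A v"
  shows "annihilated (cnj ` S) A (vconj v)"
proof -
  have "vconj (shift_prod A L v) = shift_prod A (map cnj L) (vconj v)" for L
    by (induction L) (simp_all add: vconj_diff vconj_scale vconj_matrix_vector_mult real)
  then show ?thesis
    using assms(2) unfolding annihilated_def by (metis image_mono set_map vconj_eq_0_iff)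
qed

section \<open>A frame adapted to the matrix\<close>

lemma independent_range_sum_eq_0:
  fixes b :: "'n::finite \<Rightarrow> complex^'m"
  assumes "inj b" and "vec.independent (range b)" and "(\<Sum>j\<in>UNIV. \<gamma> j *s b j) = 0"
  shows "\<gamma> l = 0"
proof -
  have sum_eq_0: "(\<Sum>v\<in>range b. \<gamma> (inv b v) *s v) = 0"
    using assms(1,3) by (simp add: sum.reindex)
  have "\<forall>c. (\<Sum>v\<in>range b. c v *s v) = 0 \<longrightarrow> (\<forall>v\<in>range b. c v = 0)"
    using assms(2) unfolding vec.independent_explicit by blast
  then have "(\<Sum>v\<in>range b. \<gamma> (inv b v) *s v) = 0 \<longrightarrow> (\<forall>v\<in>range b. \<gamma> (inv b v) = 0)"
    by (rule spec)
  then have "\<gamma> (inv b (b l)) = 0"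
    using sum_eq_0 by blast
  then show ?thesis
    using assms(1) by simp
qed

definition g0_matrix :: "real \<Rightarrow> complex^'n^'n \<Rightarrow> complex^('n option)^('n option)" where
  "g0_matrix \<alpha> R = (\<chi> i j. case (i, j) of (None, None) \<Rightarrow> complex_of_real \<alpha>
                                        | (Some l, Some j) \<Rightarrow> R $ j $ l | _ \<Rightarrow> 0)"

lemma g0_matrix_component [simp]:
  "g0_matrix \<alpha> R $ None $ None = complex_of_real \<alpha>" "g0_matrix \<alpha> R $ Some l $ Some j = R $ j $ l"
  "g0_matrix \<alpha> R $ None $ Some j = 0" "g0_matrix \<alpha> R $ Some l $ None = 0"
  by (simp_all add: g0_matrix_def)

definition conj_index :: "'n option + 'n option \<Rightarrow> 'n option + 'n option" where
  "conj_index k = (case k of Inl (Some j) \<Rightarrow> Inr (Some j) | Inr (Some j) \<Rightarrow> Inl (Some j) | _ \<Rightarrow> k)"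

locale adapted_frame =
  fixes A :: "complex^'m::finite^'m" and \<alpha> :: real and a :: "real^'m"
    and b :: "'n::finite \<Rightarrow> complex^'m" and R :: "complex^'n^'n"
  assumes real_matrix: "mconj A = A"
    and eigenvector: "A *v of_real_vec a = complex_of_real \<alpha> *s of_real_vec a"
    and a_nonzero: "a \<noteq> 0"
    and b_annihilated: "\<And>j. annihilated {\<beta>. 0 < Im \<beta>} A (b j)"
    and b_independent: "\<And>\<gamma> l. (\<Sum>j\<in>UNIV. \<gamma> j *s b j) = 0 \<Longrightarrow> \<gamma> l = 0"
    and A_mult_b: "\<And>j. A *v b j = (\<Sum>l\<in>UNIV. R $ l $ j *s b l)"
    and card: "CARD('m) = 2 * CARD('n) + 1"
begin

lemma matrix_vector_mult_b_combination:
  "A *v (\<Sum>l\<in>UNIV. x $ l *s b l) = (\<Sum>j\<in>UNIV. (R *v x) $ j *s b j)"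
proof -
  have "A *v (\<Sum>l\<in>UNIV. x $ l *s b l) = (\<Sum>l\<in>UNIV. x $ l *s (A *v b l))"
    by (simp add: vec.linear_sum[OF matrix_vector_mul_linear_gen] vector_scalar_commute)
  also have "\<dots> = (\<Sum>l\<in>UNIV. \<Sum>j\<in>UNIV. (R $ j $ l * x $ l) *s b j)"
    by (simp add: A_mult_b vec.scale_sum_right vector_smult_assoc mult.commute)
  also have "\<dots> = (\<Sum>j\<in>UNIV. (R *v x) $ j *s b j)"
    by (subst sum.swap) (simp add: matrix_vector_mult_def vec.scale_sum_left)
  finally show ?thesis .
qed

lemma R_eigenvector_eq_0:
  assumes "Im \<mu> \<le> 0" and "R *v x = \<mu> *s x"
  shows "x = 0"
proof -
  let ?y = "\<Sum>l\<in>UNIV. x $ l *s b l"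
  have "A *v ?y = \<mu> *s ?y"
    using assms(2) by (simp add: matrix_vector_mult_b_combination vec.scale_sum_right vector_smult_assoc)
  then have "annihilated {\<mu>} A ?y"
    by (rule annihilated_eigenvector)
  moreover have "annihilated {\<beta>. 0 < Im \<beta>} A ?y"
    by (intro annihilated_sum annihilated_scale b_annihilated)
  ultimately have "?y = 0"
    using annihilated_disjoint_eq_0[of "{\<mu>}" A ?y] assms(1) by force
  then have "x $ l = 0" for l
    using b_independent[of "\<lambda>l. x $ l"] by simp
  then show "x = 0"
    by (simp add: vec_eq_iff)
qed

(* The extra
   coordinate lets the frame be indexed by 'n option + 'n option, so that A \<oplus> \<alpha> becomes similar
   to B\<^sup>T \<oplus> conj B\<^sup>T for the matrix B of g0, and comparing determinants gives |det B|^2 = \<alpha> det A. *)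

definition frame :: "'n option + 'n option \<Rightarrow> complex^('m + unit)" where
  "frame k = (case k of Inl None \<Rightarrow> block_vec (of_real_vec a) 0 | Inl (Some j) \<Rightarrow> block_vec (b j) 0
                      | Inr None \<Rightarrow> block_vec 0 1 | Inr (Some j) \<Rightarrow> block_vec (vconj (b j)) 0)"

lemma frame_independent:
  assumes "(\<Sum>k\<in>UNIV. y k *s frame k) = 0"
  shows "y k = 0"
proof -
  let ?x = "y (Inl None) *s of_real_vec a"
  let ?u = "\<Sum>j\<in>UNIV. y (Inl (Some j)) *s b j"
  let ?w = "\<Sum>j\<in>UNIV. cnj (y (Inr (Some j))) *s b j"
  have "y (Inr None) = 0"
    using arg_cong[OF assms, of "\<lambda>v. v $ Inr ()"]
    by (simp add: sum_component frame_def sum_UNIV_sum sum_UNIV_option)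
  moreover have sum_eq_0: "?x + ?u + vconj ?w = 0"
  proof -
    have "(\<Sum>k\<in>UNIV. y k *s frame k) $ Inl i = 0" for i
      using assms by simp
    then show ?thesis
      by (simp add: vec_eq_iff sum_component frame_def sum_UNIV_sum sum_UNIV_option vconj_def
          of_real_vec_def cnj_sum)
  qed
  have x: "annihilated {complex_of_real \<alpha>} A ?x"
    by (intro annihilated_scale annihilated_eigenvector eigenvector)
  have u: "annihilated {\<beta>. 0 < Im \<beta>} A ?u" and "annihilated {\<beta>. 0 < Im \<beta>} A ?w"
    by (intro annihilated_sum annihilated_scale b_annihilated)+
  then have w: "annihilated (cnj ` {\<beta>. 0 < Im \<beta>}) A (vconj ?w)"
    by (intro annihilated_vconj real_matrix)
  have "{complex_of_real \<alpha>} \<inter> {\<beta>. 0 < Im \<beta>} = {}" "{complex_of_real \<alpha>} \<inter> cnj ` {\<beta>. 0 < Im \<beta>} = {}"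
    "{\<beta>. 0 < Im \<beta>} \<inter> cnj ` {\<beta>. 0 < Im \<beta>} = {}"
    by (auto simp: complex_eq_iff)
  note zero = annihilated_sum3_eq_0[OF sum_eq_0 x u w this]
  have "y (Inl None) = 0"
    using zero(1) a_nonzero by (simp add: vector_mul_eq_0)
  moreover have "y (Inl (Some j)) = 0" "y (Inr (Some j)) = 0" for j
    using b_independent[OF zero(2)] b_independent[of "\<lambda>j. cnj (y (Inr (Some j)))"] zero(3) by simp_all
  ultimately have "\<forall>k. y k = 0"
    by (simp add: split_sum_all split_option_all)
  then show "y k = 0" ..
qed

definition frame_index :: "'m + unit \<Rightarrow> 'n option + 'n option" where
  "frame_index = (SOME e. bij e)"

lemma bij_frame_index: "bij frame_index"
proof -
  have "CARD('m + unit) = CARD('n option + 'n option)"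
    using card by (simp add: card_sum)
  then have "\<exists>e :: 'm + unit \<Rightarrow> 'n option + 'n option. bij e"
    by (metis finite_class.finite_UNIV finite_same_card_bij)
  then show ?thesis
    unfolding frame_index_def by (rule someI_ex)
qed

definition frame_matrix :: "complex^('m + unit)^('m + unit)" where
  "frame_matrix = (\<chi> r c. frame (frame_index c) $ r)"

lemma sum_frame_index: "(\<Sum>c\<in>UNIV. f (frame_index c)) = (\<Sum>k\<in>UNIV. f k)"
  by (rule sum.reindex_bij_betw[OF bij_frame_index])

lemma frame_matrix_invertible: "invertible frame_matrix"
proof -
  have "frame_matrix *v x = 0 \<Longrightarrow> x = 0" for x
  proof -
    assume "frame_matrix *v x = 0"
    moreover have "frame_matrix *v x = (\<Sum>k\<in>UNIV. x $ inv frame_index k *s frame k)"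
      using sum_frame_index[of "\<lambda>k. x $ inv frame_index k *s frame k"] bij_frame_index
      by (simp add: vec_eq_iff frame_matrix_def matrix_vector_mult_def sum_component bij_is_inj mult.commute)
    ultimately have "(\<Sum>k\<in>UNIV. x $ inv frame_index k *s frame k) = 0"
      by simp
    then have "x $ inv frame_index k = 0" for k
      by (rule frame_independent)
    then have "x $ c = 0" for c
      using bij_frame_index[THEN bij_is_inj] by (metis inv_f_f)
    then show "x = 0"
      by (simp add: vec_eq_iff)
  qed
  then have "inj ((*v) frame_matrix)"
    by (simp add: vec.inj_iff_eq_0)
  then show ?thesis
    using det_nz_iff_inj_gen[of "(*v) frame_matrix"] by (simp add: invertible_det_nz)
qed

definition A_oplus_alpha :: "complex^('m + unit)^('m + unit)" where
  "A_oplus_alpha = block_diag A (mat (complex_of_real \<alpha>))"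

definition A_in_frame :: "complex^('n option + 'n option)^('n option + 'n option)" where
  "A_in_frame = block_diag (transpose (g0_matrix \<alpha> R)) (mconj (transpose (g0_matrix \<alpha> R)))"

lemma frame_similarity: "A_oplus_alpha *v frame k = (\<Sum>k'\<in>UNIV. A_in_frame $ k' $ k *s frame k')"
proof -
  have "A *v vconj (b j) = (\<Sum>l\<in>UNIV. cnj (R $ l $ j) *s vconj (b l))" for j
    using arg_cong[OF A_mult_b[of j], of vconj] real_matrix
    by (simp add: vconj_matrix_vector_mult vconj_sum vconj_scale)
  then have "\<forall>k. A_oplus_alpha *v frame k = (\<Sum>k'\<in>UNIV. A_in_frame $ k' $ k *s frame k')"
    by (simp add: A_oplus_alpha_def A_in_frame_def split_sum_all split_option_all frame_def block_diag_mult_block_vec eigenvector A_mult_b vec_eq_iff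
        sum_component sum_UNIV_sum sum_UNIV_option mat_matrix_vector_mult transpose_def mconj_def)
  then show ?thesis ..
qed

lemma frame_matrix_similarity:
  "A_oplus_alpha ** frame_matrix = frame_matrix ** (\<chi> c c'. A_in_frame $ frame_index c $ frame_index c')"
  (is "_ = frame_matrix ** ?D")
proof -
  have "(A_oplus_alpha ** frame_matrix) $ r $ c = (frame_matrix ** ?D) $ r $ c" for r c
  proof -
    have "(A_oplus_alpha ** frame_matrix) $ r $ c = (A_oplus_alpha *v frame (frame_index c)) $ r"
      by (simp add: matrix_matrix_mult_def matrix_vector_mult_def frame_matrix_def)
    also have "\<dots> = (\<Sum>k\<in>UNIV. frame k $ r * A_in_frame $ k $ frame_index c)"
      by (simp add: frame_similarity sum_component mult.commute)
    also have "\<dots> = (frame_matrix ** ?D) $ r $ c"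
      using sum_frame_index[of "\<lambda>k. frame k $ r * A_in_frame $ k $ frame_index c"]
      by (simp add: matrix_matrix_mult_def frame_matrix_def)
    finally show ?thesis .
  qed
  then show ?thesis
    by (simp add: vec_eq_iff)
qed

lemma det_relation:
  "det A * complex_of_real \<alpha> = det (g0_matrix \<alpha> R) * cnj (det (g0_matrix \<alpha> R))"
proof -
  have "det A_oplus_alpha * det frame_matrix
      = det frame_matrix * det (\<chi> c c'. A_in_frame $ frame_index c $ frame_index c')"
    using arg_cong[OF frame_matrix_similarity, of det] unfolding det_mul .
  then have "det A_oplus_alpha = det (\<chi> c c'. A_in_frame $ frame_index c $ frame_index c')"
    using frame_matrix_invertible by (simp add: invertible_det_nz)
  also have "\<dots> = det A_in_frame"
    by (rule det_reindex_bij[OF bij_frame_index])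
  moreover have "det (mat (complex_of_real \<alpha>) :: complex^unit^unit) = complex_of_real \<alpha>"
    by (subst det_diagonal) (simp_all add: mat_def UNIV_unit)
  ultimately show ?thesis
    by (simp add: A_oplus_alpha_def A_in_frame_def det_block_diag det_mconj)
qed

lemma all_frame_index: "(\<forall>k. P k) \<longleftrightarrow> (\<forall>c. P (frame_index c))"
  by (metis bij_frame_index bij_is_surj surjD)

lemma frame_dual_system_unique: "\<exists>!\<sigma>. \<forall>k. (\<Sum>r\<in>UNIV. frame k $ r * \<sigma> $ r) = t k"
proof -
  obtain B where B: "frame_matrix ** B = mat 1" "B ** frame_matrix = mat 1"
    using frame_matrix_invertible unfolding invertible_def by blast
  let ?\<tau> = "\<chi> c. t (frame_index c)"
  have "(\<forall>k. (\<Sum>r\<in>UNIV. frame k $ r * \<sigma> $ r) = t k) \<longleftrightarrow> \<sigma> v* frame_matrix = ?\<tau>" for \<sigma>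
  proof -
    have "(\<sigma> v* frame_matrix) $ c = (\<Sum>r\<in>UNIV. frame (frame_index c) $ r * \<sigma> $ r)" for c
      by (simp add: vector_matrix_mult_def frame_matrix_def mult.commute)
    then show ?thesis
      by (simp add: vec_eq_iff all_frame_index[of "\<lambda>k. (\<Sum>r\<in>UNIV. frame k $ r * \<sigma> $ r) = t k"])
  qed
  moreover have "\<exists>!\<sigma>. \<sigma> v* frame_matrix = ?\<tau>"
  proof
    show "(?\<tau> v* B) v* frame_matrix = ?\<tau>"
      by (simp add: vector_matrix_mul_assoc B)
    show "\<sigma> = ?\<tau> v* B" if "\<sigma> v* frame_matrix = ?\<tau>" for \<sigma>
      by (metis B(1) that vector_matrix_mul_assoc vector_matrix_mul_rid)
  qed
  ultimately show ?thesis
    by simp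
qed

lemma frame_conj_index: "frame (conj_index k) = vconj (frame k)"
proof -
  have "\<forall>k. frame (conj_index k) = vconj (frame k)"
    by (simp add: split_sum_all split_option_all conj_index_def frame_def vec_eq_iff vconj_def
        of_real_vec_def)
  then show ?thesis ..
qed

lemma real_span_translations:
  assumes "Im (q $ None) = 0"
  shows "\<exists>s. q = (\<Sum>i\<in>UNIV. complex_of_real (s i) *s uvec a b i)"
proof -
  define t where "t k = (case k of Inl None \<Rightarrow> q $ None | Inl (Some j) \<Rightarrow> q $ Some j
      | Inr None \<Rightarrow> 0 | Inr (Some j) \<Rightarrow> cnj (q $ Some j))" for k
  obtain \<sigma> where \<sigma>: "\<And>k. (\<Sum>r\<in>UNIV. frame k $ r * \<sigma> $ r) = t k"
    and unique: "\<And>\<sigma>'. \<forall>k. (\<Sum>r\<in>UNIV. frame k $ r * \<sigma>' $ r) = t k \<Longrightarrow> \<sigma>' = \<sigma>"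
    using frame_dual_system_unique[of t] by metis
  have t_conj: "\<forall>k. cnj (t (conj_index k)) = t k"
    using assms by (simp add: split_sum_all split_option_all t_def conj_index_def complex_eq_iff)
  \<comment> \<open>the system is invariant under conjugation, so its unique solution is real\<close>
  have "(\<Sum>r\<in>UNIV. frame k $ r * vconj \<sigma> $ r) = t k" for k
  proof -
    have "(\<Sum>r\<in>UNIV. frame k $ r * vconj \<sigma> $ r) = cnj (\<Sum>r\<in>UNIV. frame (conj_index k) $ r * \<sigma> $ r)"
      by (simp add: frame_conj_index vconj_def cnj_sum)
    also have "\<dots> = t k"
      using t_conj by (simp add: \<sigma>)
    finally show ?thesis .
  qed
  then have "vconj \<sigma> = \<sigma>"
    using unique by blast
  then have "\<sigma> $ r \<in> \<real>" for r
    by (metis Reals_cnj_iff vconj_def vec_lambda_beta)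
  then have real: "complex_of_real (Re (\<sigma> $ r)) = \<sigma> $ r" for r
    by (simp add: of_real_Re)
  have "\<forall>c. q $ c = (\<Sum>i\<in>UNIV. complex_of_real (Re (\<sigma> $ Inl i)) *s uvec a b i) $ c"
    using \<sigma>[of "Inl None"] \<sigma>[of "Inl (Some _)"]
    by (simp add: split_option_all t_def frame_def uvec_def sum_component sum_UNIV_sum real of_real_vec_def mult.commute)
  then show ?thesis
    by (auto simp: vec_eq_iff)
qed

end

section \<open>Holomorphic functions on H x C^n\<close>

lemma holo_continuous_on: "holo f S \<Longrightarrow> continuous_on S f"
  unfolding holo_def by (meson continuous_at_imp_continuous_on has_derivative_continuous)

lemma holo_imp_holomorphic_on_line:
  assumes "holo f S" and "open T" and "\<And>\<zeta>. \<zeta> \<in> T \<Longrightarrow> p + \<zeta> *s v \<in> S"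
  shows "(\<lambda>\<zeta>. f (p + \<zeta> *s v)) holomorphic_on T"
  unfolding holomorphic_on_open[OF assms(2)]
proof
  fix \<zeta> assume "\<zeta> \<in> T"
  then obtain L where L: "(f has_derivative L) (at (p + \<zeta> *s v))" "\<And>c w. L (c *s w) = c * L w"
    using assms(1,3) unfolding holo_def by blast
  have "bounded_linear (\<lambda>h::complex. h *s v)"
    by (rule bounded_linearI') (simp_all add: vector_sadd_rdistrib vec_eq_iff)
  then have "((\<lambda>\<zeta>. p + \<zeta> *s v) has_derivative (\<lambda>h. h *s v)) (at \<zeta>)"
    using has_derivative_add[OF has_derivative_const[of p] bounded_linear_imp_has_derivative] by simp
  from diff_chain_at[OF this L(1)] L(2)
  have "((\<lambda>\<zeta>. f (p + \<zeta> *s v)) has_derivative (\<lambda>h. h * L v)) (at \<zeta>)"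
    by (simp add: comp_def)
  then show "\<exists>f'. ((\<lambda>\<zeta>. f (p + \<zeta> *s v)) has_field_derivative f') (at \<zeta>)"
    unfolding has_field_derivative_def mult_commute_abs by blast
qed

lemma upper_domain_iff: "p \<in> upper_domain \<longleftrightarrow> 0 < Im (p $ None)"
  by (simp add: upper_domain_def)

lemma holo_on_w_axis:
  assumes "holo f upper_domain"
  shows "(\<lambda>w. f (axis None w)) holomorphic_on {w. 0 < Im w}"
proof -
  have line: "axis None w = 0 + w *s (\<chi> i. if i = None then 1 else 0)" for w :: complex
    by (simp add: vec_eq_iff axis_def)
  show ?thesis
    unfolding line by (rule holo_imp_holomorphic_on_line[OF assms open_halfspace_Im_gt]) (simp add: upper_domain_iff)
qed

lemma upper_domain_add_real:
  "p \<in> upper_domain \<Longrightarrow> Im (v $ None) = 0 \<Longrightarrow> p + v \<in> upper_domain"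
  by (simp add: upper_domain_iff)

lemma periodic_int_combination:
  assumes periodic: "\<And>i p. p \<in> upper_domain \<Longrightarrow> f (p + u i) = f p"
    and real: "\<And>i. Im (u i $ None) = 0"
    and p: "p \<in> upper_domain"
  shows "f (p + (\<Sum>i\<in>I. of_int (k i) *s u i)) = f p"
proof -
  have multiple: "f (p + of_int z *s u i) = f p" if "p \<in> upper_domain" for p z i
  proof (induction z rule: int_induct[where k = 0])
    case (step1 z)
    have "p + of_int z *s u i \<in> upper_domain"
      using that real by (simp add: upper_domain_add_real)
    then have "f (p + of_int z *s u i + u i) = f (p + of_int z *s u i)"
      by (rule periodic)
    then show ?case
      using step1.IH by (simp add: vector_sadd_rdistrib add.assoc)
  next
    case (step2 z)
    have "p + of_int (z - 1) *s u i \<in> upper_domain"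
      using that real by (simp add: upper_domain_add_real)
    then have "f (p + of_int (z - 1) *s u i + u i) = f (p + of_int (z - 1) *s u i)"
      by (rule periodic)
    then show ?case
      using step2.IH by (simp add: vector_sub_rdistrib algebra_simps)
  qed simp
  from p show ?thesis
  proof (induction I arbitrary: p rule: infinite_finite_induct)
    case (insert j I)
    have "p + of_int (k j) *s u j \<in> upper_domain"
      using insert.prems real by (simp add: upper_domain_add_real)
    then have "f (p + of_int (k j) *s u j + (\<Sum>i\<in>I. of_int (k i) *s u i)) = f p"
      using insert.IH multiple[OF insert.prems] by simp
    then show ?case
      using insert.hyps by (simp add: add.assoc)
  qed simp_all
qed

lemma periodic_bounded_on_slice:
  fixes f :: "complex^('n::finite option) \<Rightarrow> complex" and u :: "'m::finite \<Rightarrow> complex^('n option)"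
  assumes cont: "continuous_on upper_domain f"
    and periodic: "\<And>i p. p \<in> upper_domain \<Longrightarrow> f (p + u i) = f p"
    and real: "\<And>i. Im (u i $ None) = 0"
    and span: "\<And>q. Im (q $ None) = 0 \<Longrightarrow> \<exists>s. q = (\<Sum>i\<in>UNIV. complex_of_real (s i) *s u i)"
    and "0 < t"
  shows "\<exists>B. \<forall>q. Im (q $ None) = t \<longrightarrow> norm (f q) \<le> B"
proof -
  define c :: "complex^('n option)" where "c = axis None (\<i> * complex_of_real t)"
  define g where "g s = (\<Sum>i\<in>UNIV. (s $ i) *\<^sub>R u i) + c" for s :: "real^'m"
  define K where "K = g ` cbox 0 (\<chi> i. 1)"
  have "compact K"
    unfolding K_def g_def by (intro compact_continuous_image continuous_intros compact_cbox)
  moreover have K: "K \<subseteq> upper_domain"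
    using real \<open>0 < t\<close> by (auto simp: K_def g_def c_def upper_domain_iff sum_component Im_sum)
  ultimately obtain B where B: "\<And>x. x \<in> K \<Longrightarrow> norm (f x) \<le> B"
    using compact_imp_bounded[OF compact_continuous_image[OF continuous_on_subset[OF cont K]]]
    by (metis bounded_iff imageI)
  have "norm (f q) \<le> B" if q: "Im (q $ None) = t" for q
  proof -
    obtain s where s: "q - c = (\<Sum>i\<in>UNIV. complex_of_real (s i) *s u i)"
      using span[of "q - c"] q by (auto simp: c_def)
    define r :: "real^'m" where "r = (\<chi> i. frac (s i))"
    have "g r \<in> K"
      unfolding K_def by (rule imageI) (auto simp: r_def mem_box_cart frac_lt_1 less_imp_le)
    moreover have "q = g r + (\<Sum>i\<in>UNIV. of_int \<lfloor>s i\<rfloor> *s u i)"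
      using s by (simp add: g_def r_def vec_eq_iff sum_component)
        (simp add: frac_def scaleR_conv_of_real algebra_simps flip: sum.distrib)
    ultimately show ?thesis
      using B periodic_int_combination[of f u, OF periodic real] K by auto
  qed
  then show ?thesis
    by blast
qed

lemma periodic_holo_eq_on_w_axis:
  fixes f :: "complex^('n::finite option) \<Rightarrow> complex" and u :: "'m::finite \<Rightarrow> complex^('n option)"
  assumes holo: "holo f upper_domain"
    and periodic: "\<And>i p. p \<in> upper_domain \<Longrightarrow> f (p + u i) = f p"
    and real: "\<And>i. Im (u i $ None) = 0"
    and span: "\<And>q. Im (q $ None) = 0 \<Longrightarrow> \<exists>s. q = (\<Sum>i\<in>UNIV. complex_of_real (s i) *s u i)"
    and p: "p \<in> upper_domain"
  shows "f p = f (axis None (p $ None))"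
proof -
  obtain B where B: "\<And>q. Im (q $ None) = Im (p $ None) \<Longrightarrow> norm (f q) \<le> B"
    using periodic_bounded_on_slice[OF holo_continuous_on[OF holo] periodic real span] p
    by (auto simp: upper_domain_iff)
  define v where "v = p - axis None (p $ None)"
  define h where "h \<zeta> = f (axis None (p $ None) + \<zeta> *s v)" for \<zeta>
  have "h holomorphic_on UNIV"
    unfolding h_def using p
    by (intro holo_imp_holomorphic_on_line[OF holo]) (simp_all add: upper_domain_iff v_def)
  moreover have "Im ((axis None (p $ None) + \<zeta> *s v) $ None) = Im (p $ None)" for \<zeta>
    by (simp add: v_def)
  then have "bounded (range h)"
    unfolding bounded_iff h_def using B by blast
  ultimately obtain y where "\<And>\<zeta>. h \<zeta> = y"
    using Liouville_theorem[of h] unfolding constant_on_def by blast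
  from this[of 1] this[of 0] show ?thesis
    by (simp add: h_def v_def)
qed

definition upper_period :: "(complex \<Rightarrow> 'a) \<Rightarrow> real \<Rightarrow> bool" where
  "upper_period f p \<longleftrightarrow> (\<forall>w. 0 < Im w \<longrightarrow> f (w + complex_of_real p) = f w)"

lemma holomorphic_constant_of_small_periods:
  assumes holo: "f holomorphic_on {w. 0 < Im w}"
    and nonzero: "\<And>n. \<epsilon> n \<noteq> 0" and lim: "\<epsilon> \<longlonglongrightarrow> 0" and period: "\<And>n. upper_period f (\<epsilon> n)"
  shows "\<exists>c. \<forall>w. 0 < Im w \<longrightarrow> f w = c"
proof -
  have "(f has_field_derivative 0) (at w within {w. 0 < Im w})" if w: "0 < Im w" for w
  proof -
    obtain d where d: "(f has_field_derivative d) (at w)"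
      using holo w by (auto simp: holomorphic_on_open open_halfspace_Im_gt)
    define X where "X n = w + complex_of_real (\<epsilon> n)" for n
    have "((\<lambda>y. (f y - f w) / (y - w)) \<longlongrightarrow> d) (at w within UNIV)"
      using d has_field_derivative_iff by blast
    moreover have "X n \<in> UNIV - {w}" for n
      using nonzero by (simp add: X_def)
    moreover have "X \<longlonglongrightarrow> w"
      unfolding X_def using tendsto_add[OF tendsto_const tendsto_of_real[OF lim], of w] by simp
    ultimately have "((\<lambda>y. (f y - f w) / (y - w)) \<circ> X) \<longlonglongrightarrow> d"
      by (rule tendsto_at_iff_sequentially[THEN iffD1, rule_format])
    moreover have "(\<lambda>y. (f y - f w) / (y - w)) \<circ> X = (\<lambda>_. 0)"
      using period w by (simp add: X_def upper_period_def comp_def)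
    ultimately have "d = 0"
      by (simp add: LIMSEQ_const_iff)
    then show ?thesis
      using d has_field_derivative_at_within by blast
  qed
  then show ?thesis
    using has_field_derivative_zero_constant[OF convex_halfspace_Im_gt] by blast
qed

lemma upper_period_scale:
  assumes "0 < \<alpha>" and "inj T"
    and rel: "\<And>w. 0 < Im w \<Longrightarrow> f w = T (f (complex_of_real \<alpha> * w))"
    and period: "upper_period f p"
  shows "upper_period f (p / \<alpha>)" and "upper_period f (\<alpha> * p)"
proof -
  show "upper_period f (p / \<alpha>)"
    unfolding upper_period_def
  proof (intro allI impI)
    fix w :: complex assume w: "0 < Im w"
    have "f (w + complex_of_real (p / \<alpha>)) = T (f (complex_of_real \<alpha> * w + complex_of_real p))"
      using rel[of "w + complex_of_real (p / \<alpha>)"] w \<open>0 < \<alpha>\<close> by (simp add: distrib_left)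
    also have "\<dots> = f w"
      using period rel[OF w] w \<open>0 < \<alpha>\<close> by (simp add: upper_period_def)
    finally show "f (w + complex_of_real (p / \<alpha>)) = f w" .
  qed
  show "upper_period f (\<alpha> * p)"
    unfolding upper_period_def
  proof (intro allI impI)
    fix w :: complex assume w: "0 < Im w"
    let ?w' = "w / complex_of_real \<alpha>"
    have w': "0 < Im ?w'" and \<alpha>w': "complex_of_real \<alpha> * ?w' = w"
      using w \<open>0 < \<alpha>\<close> by (simp_all add: Im_divide_of_real)
    have "T (f (w + complex_of_real (\<alpha> * p))) = f (?w' + complex_of_real p)"
      using rel[of "?w' + complex_of_real p"] w' \<alpha>w' by (simp add: distrib_left)
    also have "\<dots> = T (f w)"
      using period w' rel[OF w'] \<alpha>w' by (simp add: upper_period_def)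
    finally show "f (w + complex_of_real (\<alpha> * p)) = f w"
      using \<open>inj T\<close> by (simp add: inj_eq)
  qed
qed

lemma upper_periods_accumulate:
  assumes "0 < \<alpha>" and "\<alpha> \<noteq> 1" and "inj T"
    and rel: "\<And>w. 0 < Im w \<Longrightarrow> f w = T (f (complex_of_real \<alpha> * w))"
    and period: "upper_period f p" and "p \<noteq> 0"
  shows "\<exists>\<epsilon>. (\<forall>n. \<epsilon> n \<noteq> 0) \<and> \<epsilon> \<longlonglongrightarrow> 0 \<and> (\<forall>n. upper_period f (\<epsilon> n))"
proof -
  define c where "c = (if \<alpha> < 1 then \<alpha> else 1 / \<alpha>)"
  have c: "0 < c" "c < 1"
    using assms(1,2) by (auto simp: c_def)
  have scale: "upper_period f (c * q)" if "upper_period f q" for q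
    using upper_period_scale[OF assms(1,3) rel that] by (simp add: c_def)
  have "upper_period f (c ^ n * p)" for n
    by (induction n) (simp_all add: period scale mult.assoc)
  moreover have "(\<lambda>n. c ^ n * p) \<longlonglongrightarrow> 0"
    using c by (simp add: LIMSEQ_power_zero tendsto_mult_left_zero)
  moreover have "c ^ n * p \<noteq> 0" for n
    using c \<open>p \<noteq> 0\<close> by simp
  ultimately show ?thesis
    by (intro exI[of _ "\<lambda>n. c ^ n * p"]) auto
qed

section \<open>The generators and the vanishing theorems\<close>

lemma g0_eq_matrix_vector_mult: "g0 \<alpha> R p = g0_matrix \<alpha> R *v p"
  by (auto simp: vec_eq_iff g0_def matrix_vector_mult_def sum_UNIV_option split: option.split)

lemma g0_axis_None: "g0 \<alpha> R (axis None w) = axis None (complex_of_real \<alpha> * w)"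
  by (auto simp: vec_eq_iff g0_def axis_def split: option.split)

lemma g0_upper_domain: "0 < \<alpha> \<Longrightarrow> p \<in> upper_domain \<Longrightarrow> g0 \<alpha> R p \<in> upper_domain"
  by (simp add: upper_domain_iff g0_def)

lemma has_derivative_g0: "(g0 \<alpha> R has_derivative g0 \<alpha> R) (at p)"
  unfolding g0_eq_matrix_vector_mult[abs_def]
  by (rule bounded_linear_imp_has_derivative[OF matrix_vector_mul_bounded_linear])

lemma g0_axis_component: "g0 \<alpha> R (axis k 1) $ l = g0_matrix \<alpha> R $ l $ k"
  unfolding g0_eq_matrix_vector_mult
  by (simp add: matrix_vector_mult_def axis_def if_distrib[of "\<lambda>x. _ * x"] cong: if_cong)

lemma cjac_g0: "cjac (g0 \<alpha> R) = det (g0_matrix \<alpha> R)"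
  by (simp add: cjac_def g0_axis_component)

lemma has_derivative_translation: "((\<lambda>p. p + c) has_derivative id) (at p)"
  unfolding id_def by (intro derivative_eq_intros) auto

lemma cjac_id: "cjac (id :: complex^'k \<Rightarrow> complex^'k) = 1"
proof -
  have "(\<chi> i j. id (axis j 1) $ i) = (mat 1 :: complex^'k^'k)"
    by (simp add: vec_eq_iff axis_def mat_def)
  then show ?thesis
    unfolding cjac_def by simp
qed

lemma generator_in_gen_group: "s \<in> S \<Longrightarrow> s \<in> gen_group S"
  using gg_gen[OF gg_id] by (metis comp_id)

lemma form_at_axis: "form_at c p (axis k 1) = c k p"
proof -
  have "form_at c p (axis k 1) = (\<Sum>i\<in>UNIV. if i = k then c i p else 0)"
    unfolding form_at_def axis_def by (rule sum.cong) auto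
  then show ?thesis
    by simp
qed

context adapted_frame
begin

lemma periodic_eq_on_w_axis:
  assumes "holo f upper_domain" and "\<And>i p. p \<in> upper_domain \<Longrightarrow> f (p + uvec a b i) = f p"
    and "p \<in> upper_domain"
  shows "f p = f (axis None (p $ None))"
  using periodic_holo_eq_on_w_axis[OF assms(1,2) _ real_span_translations assms(3)]
  by (simp add: uvec_def)

lemma periodic_upper_period:
  assumes holo: "holo f upper_domain"
    and periodic: "\<And>i p. p \<in> upper_domain \<Longrightarrow> f (p + uvec a b i) = f p"
  shows "upper_period (\<lambda>w. f (axis None w)) (a $ i)"
  unfolding upper_period_def
proof (intro allI impI)
  fix w :: complex assume "0 < Im w"
  then have w: "axis None w \<in> upper_domain" and wu: "axis None w + uvec a b i \<in> upper_domain"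
    by (simp_all add: upper_domain_iff uvec_def)
  have "f (axis None (w + complex_of_real (a $ i))) = f (axis None w + uvec a b i)"
    using periodic_eq_on_w_axis[OF holo periodic wu] by (simp add: uvec_def)
  also have "\<dots> = f (axis None w)"
    by (rule periodic[OF w])
  finally show "f (axis None (w + complex_of_real (a $ i))) = f (axis None w)" .
qed

lemma transpose_g0_matrix_eigenvector_eq_0:
  assumes "transpose (g0_matrix \<alpha> R) *v x = \<mu> *s x" and "Im \<mu> \<le> 0" and "\<mu> \<noteq> complex_of_real \<alpha>"
  shows "x = 0"
proof -
  have "complex_of_real \<alpha> * x $ None = \<mu> * x $ None"
    using arg_cong[OF assms(1), of "\<lambda>v. v $ None"]
    by (simp add: matrix_vector_mult_def sum_UNIV_option transpose_def)
  then have "x $ None = 0"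
    using assms(3) by simp
  moreover have "R *v (\<chi> l. x $ Some l) = \<mu> *s (\<chi> l. x $ Some l)"
    using assms(1) by (simp add: vec_eq_iff split_option_all matrix_vector_mult_def sum_UNIV_option transpose_def)
  then have "(\<chi> l. x $ Some l) = 0"
    using R_eigenvector_eq_0 assms(2) by blast
  ultimately show ?thesis
    by (simp add: vec_eq_iff split_option_all)
qed

lemma norm_det_g0_matrix:
  assumes "det A = 1"
  shows "norm (det (g0_matrix \<alpha> R)) ^ 2 = \<alpha>"
proof -
  have "complex_of_real (norm (det (g0_matrix \<alpha> R)) ^ 2) = complex_of_real \<alpha>"
    unfolding complex_norm_square using det_relation assms by simp
  then show ?thesis
    using of_real_eq_iff by blast
qed

end

locale hyperbolic_frame = adapted_frame A \<alpha> a b R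
  for A :: "complex^'m::finite^'m" and \<alpha> a and b :: "'n::finite \<Rightarrow> complex^'m" and R +
  assumes alpha_pos: "0 < \<alpha>" and alpha_ne_1: "\<alpha> \<noteq> 1"
begin

lemma periodic_scaling_family_constant:
  fixes F :: "'k::finite \<Rightarrow> complex^('n option) \<Rightarrow> complex" and T :: "complex^'k \<Rightarrow> complex^'k"
  assumes holo: "\<And>k. holo (F k) upper_domain"
    and periodic: "\<And>k i p. p \<in> upper_domain \<Longrightarrow> F k (p + uvec a b i) = F k p"
    and scaling: "\<And>p. p \<in> upper_domain \<Longrightarrow> (\<chi> k. F k p) = T (\<chi> k. F k (g0 \<alpha> R p))"
    and "inj T"
  shows "\<exists>C. \<forall>p\<in>upper_domain. (\<chi> k. F k p) = C"
proof -
  define \<Phi> where "\<Phi> w = (\<chi> k. F k (axis None w))" for w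
  obtain i where "a $ i \<noteq> 0"
    using a_nonzero by (auto simp: vec_eq_iff)
  moreover have "upper_period \<Phi> (a $ i)"
    using periodic_upper_period[OF holo periodic, of _ i] by (simp add: upper_period_def \<Phi>_def vec_eq_iff)
  moreover have "\<Phi> w = T (\<Phi> (complex_of_real \<alpha> * w))" if "0 < Im w" for w
    using scaling[of "axis None w"] that by (simp add: \<Phi>_def g0_axis_None upper_domain_iff)
  ultimately obtain \<epsilon> where \<epsilon>: "\<And>n. \<epsilon> n \<noteq> 0" "\<epsilon> \<longlonglongrightarrow> 0" "\<And>n. upper_period \<Phi> (\<epsilon> n)"
    using upper_periods_accumulate[OF alpha_pos alpha_ne_1 \<open>inj T\<close>] by metis
  have "\<exists>c. \<forall>w. 0 < Im w \<longrightarrow> F k (axis None w) = c" for k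
  proof (rule holomorphic_constant_of_small_periods[OF holo_on_w_axis[OF holo] \<epsilon>(1,2)])
    show "upper_period (\<lambda>w. F k (axis None w)) (\<epsilon> n)" for n
      using \<epsilon>(3)[of n] by (simp add: upper_period_def \<Phi>_def vec_eq_iff)
  qed
  then obtain C where C: "\<And>k w. 0 < Im w \<Longrightarrow> F k (axis None w) = C k"
    by metis
  have "F k p = C k" if "p \<in> upper_domain" for k p
    using periodic_eq_on_w_axis[OF holo periodic that] C[of "p $ None"] that
    by (simp add: upper_domain_iff)
  then show ?thesis
    by (intro exI[of _ "\<chi> k. C k"]) (simp add: vec_eq_iff)
qed

lemma g0_invariant_family_vanishes:
  fixes F :: "'k::finite \<Rightarrow> complex^('n option) \<Rightarrow> complex" and T :: "complex^'k \<Rightarrow> complex^'k"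
  assumes holo: "\<And>k. holo (F k) upper_domain"
    and periodic: "\<And>k i p. p \<in> upper_domain \<Longrightarrow> F k (p + uvec a b i) = F k p"
    and scaling: "\<And>p. p \<in> upper_domain \<Longrightarrow> (\<chi> k. F k p) = T (\<chi> k. F k (g0 \<alpha> R p))"
    and "inj T" and no_fixed_point: "\<And>x. T x = x \<Longrightarrow> x = 0"
    and "p \<in> upper_domain"
  shows "F k p = 0"
proof -
  obtain C where C: "\<And>p. p \<in> upper_domain \<Longrightarrow> (\<chi> k. F k p) = C"
    using periodic_scaling_family_constant[OF holo periodic scaling \<open>inj T\<close>] by blast
  have "axis None \<i> \<in> upper_domain"
    by (simp add: upper_domain_iff)
  then have "T C = C"
    using scaling C g0_upper_domain[OF alpha_pos] by metis
  then have "(\<chi> k. F k p) = 0"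
    using C[OF \<open>p \<in> upper_domain\<close>] no_fixed_point by simp
  then show ?thesis
    by (simp add: vec_eq_iff)
qed

lemma invariant_holo_1form_vanishes:
  assumes inv: "invariant_holo_1form (gen_group (generators \<alpha> R a b)) upper_domain c"
    and "p \<in> upper_domain"
  shows "c k p = 0"
proof (rule g0_invariant_family_vanishes[where T = "(*v) (transpose (g0_matrix \<alpha> R))"])
  have pullback: "form_at c (g q) (g' v) = form_at c q v"
    if "g \<in> generators \<alpha> R a b" "q \<in> upper_domain" "(g has_derivative g') (at q)" for g g' q v
    using inv that generator_in_gen_group unfolding invariant_holo_1form_def by blast
  show "holo (c k) upper_domain" for k
    using inv unfolding invariant_holo_1form_def by blast
  show "c k (q + uvec a b i) = c k q" if "q \<in> upper_domain" for k i q
    using pullback[OF _ that has_derivative_translation, where v = "axis k 1"]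
    by (simp add: generators_def form_at_axis)
  show "(\<chi> k. c k q) = transpose (g0_matrix \<alpha> R) *v (\<chi> k. c k (g0 \<alpha> R q))"
    if "q \<in> upper_domain" for q
  proof -
    have "c k q = form_at c (g0 \<alpha> R q) (g0 \<alpha> R (axis k 1))" for k
      using pullback[OF _ that has_derivative_g0, where v = "axis k 1"]
      by (simp add: generators_def form_at_axis)
    then show ?thesis
      by (simp add: vec_eq_iff form_at_def g0_axis_component matrix_vector_mult_def transpose_def
          mult.commute)
  qed
  have "x = 0" if "transpose (g0_matrix \<alpha> R) *v x = 0" for x
    using transpose_g0_matrix_eigenvector_eq_0[of x 0] that alpha_pos by simp
  then show "inj ((*v) (transpose (g0_matrix \<alpha> R)))"
    by (simp add: vec.inj_iff_eq_0)
  show "x = 0" if "transpose (g0_matrix \<alpha> R) *v x = x" for x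
    using transpose_g0_matrix_eigenvector_eq_0[of x 1] that alpha_ne_1 by simp
qed fact

lemma det_g0_matrix_power_ne_1:
  assumes "det A = 1" and "0 < n"
  shows "det (g0_matrix \<alpha> R) ^ n \<noteq> 1"
proof
  assume "det (g0_matrix \<alpha> R) ^ n = 1"
  then have "norm (det (g0_matrix \<alpha> R)) ^ n = 1 ^ n"
    by (metis norm_one norm_power power_one)
  then have "norm (det (g0_matrix \<alpha> R)) = 1"
    by (rule power_eq_imp_eq_base) (use \<open>0 < n\<close> in simp_all)
  then show False
    using norm_det_g0_matrix[OF \<open>det A = 1\<close>] alpha_ne_1 by simp
qed

lemma invariant_pluricanonical_vanishes:
  assumes "det A = 1" and "0 < n"
    and inv: "invariant_pluricanonical (gen_group (generators \<alpha> R a b)) upper_domain n h"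
    and "p \<in> upper_domain"
  shows "h p = 0"
proof (rule g0_invariant_family_vanishes[where F = "\<lambda>_::unit. h" and T = "(*s) (det (g0_matrix \<alpha> R) ^ n)"])
  have pullback: "h (g q) * cjac g' ^ n = h q"
    if "g \<in> generators \<alpha> R a b" "q \<in> upper_domain" "(g has_derivative g') (at q)" for g g' q
    using inv that generator_in_gen_group unfolding invariant_pluricanonical_def by blast
  show "holo h upper_domain"
    using inv unfolding invariant_pluricanonical_def by blast
  show "h (q + uvec a b i) = h q" if "q \<in> upper_domain" for i q
    using pullback[OF _ that has_derivative_translation] by (simp add: generators_def cjac_id)
  show "(\<chi> u. h q) = det (g0_matrix \<alpha> R) ^ n *s (\<chi> u. h (g0 \<alpha> R q))" if "q \<in> upper_domain" for q
    using pullback[OF _ that has_derivative_g0] by (simp add: vec_eq_iff generators_def cjac_g0 mult.commute)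
  have "det (g0_matrix \<alpha> R) \<noteq> 0"
    using norm_det_g0_matrix[OF \<open>det A = 1\<close>] alpha_pos by auto
  then show "inj ((*s) (det (g0_matrix \<alpha> R) ^ n))"
    by (auto intro!: injI simp: vector_mul_lcancel)
  show "x = 0" if "det (g0_matrix \<alpha> R) ^ n *s x = x" for x :: "complex^unit"
    using that det_g0_matrix_power_ne_1[OF assms(1,2)] by (auto simp: vec_eq_iff)
qed fact

end

theorem proposition4p2:
  fixes M :: "int^'m^'m" and \<alpha> :: real and a :: "real^'m"
    and b :: "'n::finite \<Rightarrow> complex^'m" and R :: "complex^'n^'n"
  defines "Mc \<equiv> (\<chi> i j. complex_of_int (M $ i $ j)) :: complex^'m^'m"
  defines "W \<equiv> vec.span (\<Union>{gen_eigenspace Mc \<beta> | \<beta>. ceigenvalue Mc \<beta> \<and> Im \<beta> > 0})"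
  defines "G \<equiv> gen_group (generators \<alpha> R a b)"
  assumes dim: "CARD('m) = 2 * CARD('n) + 1"
    and detM: "det M = 1"
    and alpha_pos: "\<alpha> > 0" and alpha_ne1: "\<alpha> \<noteq> 1"
    and only_real: "\<forall>\<mu>. ceigenvalue Mc \<mu> \<and> Im \<mu> = 0 \<longrightarrow> \<mu> = complex_of_real \<alpha>"
    and simple: "vec.dim (gen_eigenspace Mc (complex_of_real \<alpha>)) = 1"
    and a_eig: "a \<noteq> 0" "(\<chi> i j. real_of_int (M $ i $ j)) *v a = \<alpha> *s a"
    and b_basis: "inj b" "vec.independent (range b)" "vec.span (range b) = W"
    and R_def: "\<forall>j. Mc *v b j = (\<Sum>l\<in>UNIV. R $ l $ j *s b l)"
  shows "(\<forall>c. invariant_holo_1form G upper_domain c \<longrightarrow> (\<forall>i. \<forall>p\<in>upper_domain. c i p = 0))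
       \<and> (\<forall>k h. k > 0 \<longrightarrow> invariant_pluricanonical G upper_domain k h \<longrightarrow> (\<forall>p\<in>upper_domain. h p = 0))"
proof -
  have "W \<subseteq> {v. annihilated {\<beta>. 0 < Im \<beta>} Mc v}"
    using span_gen_eigenspaces_annihilated[of Mc "{\<beta>. 0 < Im \<beta>}"] by (simp add: W_def)
  then have "annihilated {\<beta>. 0 < Im \<beta>} Mc (b j)" for j
    using b_basis(3) vec.span_base[of "b j" "range b"] by auto
  moreover have "Mc *v of_real_vec a = complex_of_real \<alpha> *s of_real_vec a"
    using arg_cong[OF a_eig(2), of of_real_vec]
    by (simp add: of_real_vec_matrix_vector_mult of_real_vec_scale Mc_def)
  ultimately interpret hyperbolic_frame Mc \<alpha> a b R
    using a_eig(1) independent_range_sum_eq_0[OF b_basis(1,2)] R_def dim alpha_pos alpha_ne1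
    by unfold_locales (auto simp: Mc_def mconj_def vec_eq_iff)
  have "det Mc = 1"
    unfolding Mc_def det_of_int detM by simp
  then show ?thesis
    using invariant_holo_1form_vanishes invariant_pluricanonical_vanishes unfolding G_def by blast
qed

end
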